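(* Let $C$ be an arbitrary quasi-copula and let $C^\sigma$ denote either of its reflections $C^\sigma(x,y)=y-C(1-x,y)$ or $C^\sigma(x,y)=x-C(x,1-y)$ (the same choice of reflection used throughout). Then $(C^\sigma)_M=(C_O)^\sigma$ and $(C^\sigma)_O=(C_M)^\sigma$.
   Context: For a quasi-copula $Q$ on $[0,1]^2$ and $\mathbf{x}=(x_1,x_2)\in[0,1]^2$ define the sets of (possibly degenerate) rectangles $[s_1,s_2]\times[t_1,t_2]\subseteq[0,1]^2$: $\mathcal{R}_\nearrow(\mathbf{x})$ those with southwest corner $\mathbf{x}$; $\mathcal{R}_\swarrow(\mathbf{x})$ those with northeast corner $\mathbf{x}$; $\mathcal{R}_\nwarrow(\mathbf{x})$ those with southeast corner $\mathbf{x}$; $\mathcal{R}_\searrow(\mathbf{x})$ those with northwest corner $\mathbf{x}$. With $V_Q([s_1,s_2]\times[t_1,t_2])=Q(s_1,t_1)+Q(s_2,t_2)-Q(s_2,t_1)-Q(s_1,t_2)$, the defects are $D^Q_{\bullet}(\mathbf{x})=\inf\{V_Q(R):R\in\mathcal{R}_\bullet(\mathbf{x})\}\le0$ for $\bullet\in\{\nearrow,\swarrow,\nwarrow,\searrow\}$, $D^Q_M=\min(D^Q_\nearrow,D^Q_\swarrow)$, $D^Q_O=\min(D^Q_\nwarrow,D^Q_\searrow)$, and $Q_M=Q-D^Q_M$, $Q_O=Q+D^Q_O$ (these are quasi-copulas with $Q_O\le Q\le Q_M$). A quasi-copula is a function $[0,1]^2\to\mathbb{R}$ that is grounded ($Q(x,0)=Q(0,y)=0$),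 has neutral element 1 ($Q(x,1)=x$, $Q(1,y)=y$), and has $V_Q(R)\ge0$ for every rectangle $R\subseteq[0,1]^2$ having a side on the boundary of $[0,1]^2$. *)

theory Defs
  imports Complex_Main
begin

text \<open>Bivariate functions on [0,1]^2 are represented as real \<Rightarrow> real \<Rightarrow> real;
  only their values on [0,1]^2 matter.\<close>

type_synonym bivar = "real \<Rightarrow> real \<Rightarrow> real"

definition vol :: "bivar \<Rightarrow> real \<Rightarrow> real \<Rightarrow> real \<Rightarrow> real \<Rightarrow> real" where
  "vol Q s1 s2 t1 t2 = Q s1 t1 + Q s2 t2 - Q s2 t1 - Q s1 t2"

definition quasi_copula :: "bivar \<Rightarrow> bool" where
  "quasi_copula Q \<longleftrightarrow>
     (\<forall>x\<in>{0..1}. Q x 0 = 0 \<and> Q 0 x = 0) \<and>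
     (\<forall>x\<in>{0..1}. Q x 1 = x \<and> Q 1 x = x) \<and>
     (\<forall>s1 s2 t1 t2. 0 \<le> s1 \<and> s1 \<le> s2 \<and> s2 \<le> 1 \<and> 0 \<le> t1 \<and> t1 \<le> t2 \<and> t2 \<le> 1 \<and>
        (s1 = 0 \<or> s2 = 1 \<or> t1 = 0 \<or> t2 = 1) \<longrightarrow> vol Q s1 s2 t1 t2 \<ge> 0)"

definition D_NE :: "bivar \<Rightarrow> real \<Rightarrow> real \<Rightarrow> real" where
  "D_NE Q x y = Inf {vol Q x s2 y t2 | s2 t2. x \<le> s2 \<and> s2 \<le> 1 \<and> y \<le> t2 \<and> t2 \<le> 1}"

definition D_SW :: "bivar \<Rightarrow> real \<Rightarrow> real \<Rightarrow> real" where
  "D_SW Q x y = Inf {vol Q s1 x t1 y | s1 t1. 0 \<le> s1 \<and> s1 \<le> x \<and> 0 \<le> t1 \<and> t1 \<le> y}"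

definition D_NW :: "bivar \<Rightarrow> real \<Rightarrow> real \<Rightarrow> real" where
  "D_NW Q x y = Inf {vol Q s1 x y t2 | s1 t2. 0 \<le> s1 \<and> s1 \<le> x \<and> y \<le> t2 \<and> t2 \<le> 1}"

definition D_SE :: "bivar \<Rightarrow> real \<Rightarrow> real \<Rightarrow> real" where
  "D_SE Q x y = Inf {vol Q x s2 t1 y | s2 t1. x \<le> s2 \<and> s2 \<le> 1 \<and> 0 \<le> t1 \<and> t1 \<le> y}"

definition D_M :: "bivar \<Rightarrow> real \<Rightarrow> real \<Rightarrow> real" where
  "D_M Q x y = min (D_NE Q x y) (D_SW Q x y)"

definition D_O :: "bivar \<Rightarrow> real \<Rightarrow> real \<Rightarrow> real" where
  "D_O Q x y = min (D_NW Q x y) (D_SE Q x y)"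

definition Q_M :: "bivar \<Rightarrow> bivar" where
  "Q_M Q = (\<lambda>x y. Q x y - D_M Q x y)"

definition Q_O :: "bivar \<Rightarrow> bivar" where
  "Q_O Q = (\<lambda>x y. Q x y + D_O Q x y)"

definition refl1 :: "bivar \<Rightarrow> bivar" where
  "refl1 C = (\<lambda>x y. y - C (1 - x) y)"

definition refl2 :: "bivar \<Rightarrow> bivar" where
  "refl2 C = (\<lambda>x y. x - C x (1 - y))"

end

theory Submission
  imports Defs
begin

text \<open>Each reflection of the unit square maps the rectangles with a given corner at a point
  bijectively onto the rectangles with the mirrored corner at the mirrored point. Since the
  reflected function has volume \<open>V\<^sub>C\<^sup>\<sigma>(R) = V\<^sub>C(\<sigma>R)\<close>, the defects \<open>D\<^sub>\<nearrow>, D\<^sub>\<swarrow>\<close> of \<open>C\<^sup>\<sigma>\<close> are the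
  mirrored defects \<open>D\<^sub>\<nwarrow>, D\<^sub>\<searrow>\<close> of \<open>C\<close>, which gives \<open>(C\<^sup>\<sigma>)\<^sub>M = (C\<^sub>O)\<^sup>\<sigma>\<close>. The second identity follows
  by applying the first to \<open>C\<^sup>\<sigma>\<close>, as \<open>\<sigma>\<close> is an involution. No property of quasi-copulas is
  used.\<close>

lemma refl1_refl1 [simp]: "refl1 (refl1 C) = C"
  by (simp add: refl1_def)

lemma refl2_refl2 [simp]: "refl2 (refl2 C) = C"
  by (simp add: refl2_def)

lemma vol_refl1: "vol (refl1 C) s1 s2 t1 t2 = vol C (1 - s2) (1 - s1) t1 t2"
  by (simp add: vol_def refl1_def)

lemma vol_refl2: "vol (refl2 C) s1 s2 t1 t2 = vol C s1 s2 (1 - t2) (1 - t1)"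
  by (simp add: vol_def refl2_def)

lemma setcompr_reflect_fst:
  fixes f :: "real \<Rightarrow> 'b \<Rightarrow> 'a"
  shows "{f s t | s t. P s t} = {f (1 - s) t | s t. P (1 - s) t}"
proof (intro equalityI subsetI; clarify)
  show "\<exists>s' t'. f s t = f (1 - s') t' \<and> P (1 - s') t'" if "P s t" for s t
    using that by (intro exI[of _ "1 - s"] exI[of _ t]) simp
qed blast

lemma setcompr_reflect_snd:
  fixes f :: "'b \<Rightarrow> real \<Rightarrow> 'a"
  shows "{f s t | s t. P s t} = {f s (1 - t) | s t. P s (1 - t)}"
proof (intro equalityI subsetI; clarify)
  show "\<exists>s' t'. f s t = f s' (1 - t') \<and> P s' (1 - t')" if "P s t" for s t
    using that by (intro exI[of _ s] exI[of _ "1 - t"]) simp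
qed blast

lemma D_NE_refl1: "D_NE (refl1 C) x y = D_NW C (1 - x) y"
  unfolding D_NE_def D_NW_def vol_refl1
  by (subst setcompr_reflect_fst) (simp add: algebra_simps conj_commute conj_left_commute)

lemma D_SW_refl1: "D_SW (refl1 C) x y = D_SE C (1 - x) y"
  unfolding D_SW_def D_SE_def vol_refl1
  by (subst setcompr_reflect_fst) (simp add: algebra_simps conj_commute conj_left_commute)

lemma D_NE_refl2: "D_NE (refl2 C) x y = D_SE C x (1 - y)"
  unfolding D_NE_def D_SE_def vol_refl2
  by (subst setcompr_reflect_snd) (simp add: algebra_simps conj_commute conj_left_commute)

lemma D_SW_refl2: "D_SW (refl2 C) x y = D_NW C x (1 - y)"
  unfolding D_SW_def D_NW_def vol_refl2
  by (subst setcompr_reflect_snd) (simp add: algebra_simps conj_commute conj_left_commute)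

lemma Q_M_refl1: "Q_M (refl1 C) = refl1 (Q_O C)"
  unfolding Q_M_def Q_O_def D_M_def D_O_def D_NE_refl1 D_SW_refl1
  by (simp add: fun_eq_iff refl1_def)

lemma Q_M_refl2: "Q_M (refl2 C) = refl2 (Q_O C)"
  unfolding Q_M_def Q_O_def D_M_def D_O_def D_NE_refl2 D_SW_refl2
  by (simp add: fun_eq_iff refl2_def min.commute)

lemma Q_O_refl1: "Q_O (refl1 C) = refl1 (Q_M C)"
  using arg_cong[OF Q_M_refl1[of "refl1 C"], of refl1] by simp

lemma Q_O_refl2: "Q_O (refl2 C) = refl2 (Q_M C)"
  using arg_cong[OF Q_M_refl2[of "refl2 C"], of refl2] by simp

theorem mainTheorem6:
  fixes C :: "real \<Rightarrow> real \<Rightarrow> real"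
    and \<sigma> :: "(real \<Rightarrow> real \<Rightarrow> real) \<Rightarrow> (real \<Rightarrow> real \<Rightarrow> real)"
  assumes "quasi_copula C"
    and "\<sigma> = refl1 \<or> \<sigma> = refl2"
  shows "\<forall>x\<in>{0..1}. \<forall>y\<in>{0..1}.
           Q_M (\<sigma> C) x y = \<sigma> (Q_O C) x y \<and> Q_O (\<sigma> C) x y = \<sigma> (Q_M C) x y"
  using assms(2) Q_M_refl1 Q_O_refl1 Q_M_refl2 Q_O_refl2 by auto

end
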